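(* For every nonnegative integer $r$, $$\sum_{n=1}^{\infty}\frac{1}{(n+1)(2n+3)(2n+2r+3)}\frac{\binom{2n}{n}}{\binom{2n+2r+2}{n+r+1}}=\frac{1}{2(2r+1)\binom{2r}{r}}-\frac{1}{3(2r+3)\binom{2r+2}{r+1}}-\frac{1}{2^{2r+1}}\left(\frac{1}{4(r+1)}+\frac{\binom{2r}{r}}{2\cdot 4^{r+1}}\left(\frac{\pi^2}{2}+\sum_{k=1}^r\frac{4^k}{k^2\binom{2k}{k}}\right)\right).$$ *)

theory Defs
  imports "HOL-Analysis.Analysis"
begin

end

theory Submission
  imports Defs "HOL-Real_Asymp.Real_Asymp"
begin

text \<open>
  Induction on \<open>r\<close>. Write \<open>T\<^sub>r(m)\<close> for the summand and \<open>S\<^sub>r\<close> for the closed form.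
  A Gosper-type computation shows \<open>T\<^sub>r\<^sub>+\<^sub>1(m) = \<alpha>\<^sub>r T\<^sub>r(m) + G\<^sub>r(m) - G\<^sub>r(m + 1)\<close> with
  \<open>\<alpha>\<^sub>r = (2r + 1) / (8 (r + 1))\<close> and an explicit hypergeometric term \<open>G\<^sub>r\<close>; since
  \<open>binom(2n, n) / binom(2n + 2k, n + k) \<longrightarrow> 4\<^sup>-\<^sup>k\<close>, the telescoping part sums to
  \<open>G\<^sub>r(0) - lim G\<^sub>r\<close>, and the closed form satisfies exactly
  \<open>S\<^sub>r\<^sub>+\<^sub>1 = \<alpha>\<^sub>r S\<^sub>r + G\<^sub>r(0) - lim G\<^sub>r\<close>. For \<open>r = 0\<close> partial fractions split the summand
  into a telescoping series and a tail of \<open>\<Sum> 1 / (2k + 1)\<^sup>2 = \<pi>\<^sup>2 / 8\<close>.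
\<close>

definition central_binom :: "nat \<Rightarrow> real" where
  "central_binom n = real ((2 * n) choose n)"

lemma central_binom_0 [simp]: "central_binom 0 = 1"
  by (simp add: central_binom_def)

lemma central_binom_neq_0 [simp]: "central_binom n \<noteq> 0"
  by (simp add: central_binom_def)

lemma central_binom_fact: "central_binom n = fact (2 * n) / (fact n * fact n)"
  unfolding central_binom_def by (subst binomial_fact) (auto simp: mult_2)

lemma central_binom_Suc:
  "central_binom (Suc n) = 2 * (2 * real n + 1) / (real n + 1) * central_binom n"
proof -
  have "fact (2 * Suc n) = (2 * real n + 2) * (2 * real n + 1) * fact (2 * n)"
    by (simp add: algebra_simps)
  then show ?thesis
    unfolding central_binom_fact by (simp add: divide_simps) (simp add: algebra_simps)
qed

lemma central_binom_ratio_tendsto: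
  "(\<lambda>n. central_binom n / central_binom (n + k)) \<longlonglongrightarrow> 1 / 4 ^ k"
proof (induction k)
  case 0
  show ?case
    by simp
next
  case (Suc k)
  have "(\<lambda>n. (4 * real n + 4 * real k + 4) / (4 * real n + 4 * real k + 2)) \<longlonglongrightarrow> 1"
    by real_asymp
  then have "(\<lambda>n. central_binom n / central_binom (n + k)
                 * ((4 * real n + 4 * real k + 4) / (4 * real n + 4 * real k + 2) / 4))
             \<longlonglongrightarrow> 1 / 4 ^ k * (1 / 4)"
    by (intro tendsto_intros Suc.IH) simp_all
  moreover have "central_binom n / central_binom (n + k)
                 * ((4 * real n + 4 * real k + 4) / (4 * real n + 4 * real k + 2) / 4)
               = central_binom n / central_binom (n + Suc k)" for n
    by (simp add: central_binom_Suc divide_simps) (simp add: algebra_simps)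
  ultimately show ?case
    by (simp add: mult.commute)
qed

lemma sums_inverse_odd_squares: "(\<lambda>k. 1 / (2 * real k + 1)^2) sums (pi^2 / 8)"
proof -
  define f :: "nat \<Rightarrow> real" where "f n = 1 / (real n + 1)^2" for n
  have f: "f sums (pi^2 / 6)"
    unfolding f_def using inverse_squares_sums by (simp add: add.commute)
  have "(\<lambda>n. sum f {n * 2..<n * 2 + 2}) sums (pi^2 / 6)"
    by (rule sums_group[OF f]) simp
  moreover have "{n * 2..<n * 2 + 2} = {2 * n, 2 * n + 1}" for n :: nat
    by auto
  ultimately have pairs: "(\<lambda>n. f (2 * n) + f (2 * n + 1)) sums (pi^2 / 6)"
    by (simp add: mult.commute)
  have "(\<lambda>n. f (2 * n + 1)) = (\<lambda>n. f n / 4)"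
    by (simp add: f_def power2_eq_square algebra_simps)
  then have odds: "(\<lambda>n. f (2 * n + 1)) sums (pi^2 / 6 / 4)"
    using sums_divide[OF f, of 4] by simp
  have "(\<lambda>n. f (2 * n) + f (2 * n + 1) - f (2 * n + 1)) sums (pi^2 / 6 - pi^2 / 6 / 4)"
    by (rule sums_diff[OF pairs odds])
  then show ?thesis
    by (simp add: f_def)
qed

text \<open>The summand of the theorem, indexed by \<open>m = n - 1\<close>.\<close>

definition series_term :: "nat \<Rightarrow> nat \<Rightarrow> real" where
  "series_term r m = central_binom (m + 1)
     / ((real m + 2) * (2 * real m + 5) * (2 * real m + 2 * real r + 5) * central_binom (m + r + 2))"

definition series_value :: "nat \<Rightarrow> real" where
  "series_value r = 1 / (2 * (2 * real r + 1) * central_binom r)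
     - 1 / (3 * (2 * real r + 3) * central_binom (r + 1))
     - 1 / 2 ^ (2 * r + 1) * (1 / (4 * (real r + 1))
        + central_binom r / (2 * 4 ^ (r + 1))
          * (pi^2 / 2 + (\<Sum>k = 1..r. 4 ^ k / (real k ^ 2 * central_binom k))))"

text \<open>\<open>series_term (r + 1) - (2r + 1) / (8 (r + 1)) * series_term r\<close> is Gosper-summable,
  and this is its antidifference.\<close>

definition antidifference :: "nat \<Rightarrow> nat \<Rightarrow> real" where
  "antidifference r m = central_binom (m + 1) * (2 * real m + real r + 4)
     / (8 * (real r + 1)^2 * (real r + 2) * (2 * real m + 2 * real r + 5) * central_binom (m + r + 2))"

lemma series_term_0_sums: "series_term 0 sums series_value 0"
proof -
  have "(\<lambda>m. 1 / (2 * real (m + 2) + 1)^2) sums (pi^2 / 8 - (\<Sum>k<2. 1 / (2 * real k + 1)^2))"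
    using sums_split_initial_segment[OF sums_inverse_odd_squares, of 2] by simp
  then have squares: "(\<lambda>m. 1 / (2 * real m + 5)^2) sums (pi^2 / 8 - 10 / 9)"
    by (simp add: numeral_2_eq_2 algebra_simps)
  have "(\<lambda>m. 1 / (2 * real m + 3) - 1 / (2 * real (Suc m) + 3)) sums (1 / (2 * real 0 + 3) - 0)"
    by (rule telescope_sums') real_asymp
  then have telescope: "(\<lambda>m. 1 / (2 * real m + 3) - 1 / (2 * real m + 5)) sums (1 / 3)"
    by (simp add: algebra_simps)
  have "(\<lambda>m. (1 / (2 * real m + 3) - 1 / (2 * real m + 5)) / 8 - 1 / (2 * real m + 5)^2 / 4)
          sums (1 / 3 / 8 - (pi^2 / 8 - 10 / 9) / 4)"
    by (intro sums_diff sums_divide telescope squares)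
  moreover have "(1 / (2 * real m + 3) - 1 / (2 * real m + 5)) / 8 - 1 / (2 * real m + 5)^2 / 4
                 = series_term 0 m" for m
    by (simp add: series_term_def central_binom_Suc divide_simps power2_eq_square) (simp add: algebra_simps)
  moreover have "1 / 3 / 8 - (pi^2 / 8 - 10 / 9) / 4 = series_value 0"
    by (simp add: series_value_def central_binom_Suc field_simps)
  ultimately show ?thesis
    by simp
qed

lemma series_term_Suc:
  "series_term (Suc r) m
     = (2 * real r + 1) / (8 * (real r + 1)) * series_term r m
       + (antidifference r m - antidifference r (Suc m))"
  by (simp add: series_term_def antidifference_def central_binom_Suc divide_simps power2_eq_square)
     (simp add: algebra_simps)

lemma antidifference_tendsto:
  "antidifference r \<longlonglongrightarrow> 1 / (8 * (real r + 1)^2 * (real r + 2) * 4 ^ Suc r)"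
proof -
  have ratio: "(\<lambda>m. central_binom (Suc m) / central_binom (Suc m + Suc r)) \<longlonglongrightarrow> 1 / 4 ^ Suc r"
    using LIMSEQ_Suc[OF central_binom_ratio_tendsto[of "Suc r"]] by simp
  have "(\<lambda>m. (2 * real m + real r + 4) / (2 * real m + 2 * real r + 5)) \<longlonglongrightarrow> 1"
    by real_asymp
  then have "(\<lambda>m. central_binom (Suc m) / central_binom (Suc m + Suc r)
                       * ((2 * real m + real r + 4) / (2 * real m + 2 * real r + 5))
                       / (8 * (real r + 1)^2 * (real r + 2)))
                   \<longlonglongrightarrow> 1 / 4 ^ Suc r * 1 / (8 * (real r + 1)^2 * (real r + 2))"
    by (rule tendsto_divide[OF tendsto_mult[OF ratio] tendsto_const]) simp
  moreover have "antidifference r = (\<lambda>m. central_binom (Suc m) / central_binom (Suc m + Suc r)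
                       * ((2 * real m + real r + 4) / (2 * real m + 2 * real r + 5))
                       / (8 * (real r + 1)^2 * (real r + 2)))"
    by (rule ext) (simp add: antidifference_def)
  ultimately show ?thesis
    by (simp add: mult_ac)
qed

lemma series_value_Suc:
  "series_value (Suc r)
     = (2 * real r + 1) / (8 * (real r + 1)) * series_value r
       + (antidifference r 0 - 1 / (8 * (real r + 1)^2 * (real r + 2) * 4 ^ Suc r))"
proof -
  have pow: "(2::real) ^ (2 * n + 1) = 2 * 4 ^ n" for n
    by (simp add: power_mult)
  show ?thesis
    unfolding series_value_def antidifference_def pow
    by (simp add: central_binom_Suc divide_simps power2_eq_square)
       (simp add: algebra_simps)
qed

lemma series_term_sums: "series_term r sums series_value r"
proof (induction r)
  case 0
  show ?case
    by (rule series_term_0_sums)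
next
  case (Suc r)
  have "series_term (Suc r) = (\<lambda>m. (2 * real r + 1) / (8 * (real r + 1)) * series_term r m
              + (antidifference r m - antidifference r (Suc m)))"
    using series_term_Suc by blast
  also have "\<dots> sums ((2 * real r + 1) / (8 * (real r + 1)) * series_value r
              + (antidifference r 0 - 1 / (8 * (real r + 1)^2 * (real r + 2) * 4 ^ Suc r)))"
    by (intro sums_add sums_mult Suc.IH telescope_sums'[OF antidifference_tendsto])
  finally show ?case
    unfolding series_value_Suc .
qed

theorem theorem5p0p5:
  fixes r :: nat
  shows "(\<lambda>m. let n = m + 1 in
            1 / (real (n + 1) * real (2 * n + 3) * real (2 * n + 2 * r + 3))
            * (real (2 * n choose n) / real ((2 * n + 2 * r + 2) choose (n + r + 1))))
         sums
         (1 / (2 * real (2 * r + 1) * real (2 * r choose r))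
          - 1 / (3 * real (2 * r + 3) * real ((2 * r + 2) choose (r + 1)))
          - 1 / 2 ^ (2 * r + 1) *
            (1 / (4 * real (r + 1))
             + real (2 * r choose r) / (2 * 4 ^ (r + 1)) *
               (pi ^ 2 / 2 + (\<Sum>k = 1..r. 4 ^ k / (real k ^ 2 * real (2 * k choose k))))))"
  using series_term_sums[of r]
  unfolding series_term_def series_value_def central_binom_def Let_def
  by (simp add: algebra_simps)

end
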